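(* Let $\mathcal L$ be a factorial and almost prolongable language over a finite alphabet whose complexity function $p$ is unbounded and grows subexponentially. Then there exists an increasing sequence of positive integers $(n_d)_d$ such that the Rauzy graphs $R(n_d)$ converge to the line $\mathbf Z$ in the Benjamini–Schramm sense.
   Context: $\mathcal L_n=\mathcal L\cap\mathcal A^n$, $p(n)=|\mathcal L_n|$; $p$ grows subexponentially if $\lim_n\frac1n\log p(n)=0$. $\mathcal L$ is factorial if every subword of a word of $\mathcal L$ lies in $\mathcal L$. A word $v\in\mathcal L$ is left-prolongable (resp. right-prolongable) if $av\in\mathcal L$ (resp. $va\in\mathcal L$) for some letter $a$; $\mathcal L$ is almost prolongable if the proportions of left-prolongable and of right-prolongable words in $\mathcal L_n$ both tend to $1$. The Rauzy graph $R(n)$ has vertex set $\mathcal L_n$ and, for each $aub\in\mathcal L_{n+1}$ ($a,b$ letters), one edge between $au$ and $ub$ (loops and multiple edges allowed). Convergence to $\mathbf Z$ means: for each $r$, the proportion of vertices whose ball of radius $r$ is isomorphic to the ball of radius $r$ in the bi-infinite path tends to $1$. *)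

theory Defs
  imports Complex_Main
begin

definition Ln :: "'a list set \<Rightarrow> nat \<Rightarrow> 'a list set" where
  "Ln L n = {w \<in> L. length w = n}"

definition complexity :: "'a list set \<Rightarrow> nat \<Rightarrow> nat" where
  "complexity L n = card (Ln L n)"

definition factorial_lang :: "'a list set \<Rightarrow> bool" where
  "factorial_lang L \<longleftrightarrow> (\<forall>u x v. u @ x @ v \<in> L \<longrightarrow> x \<in> L)"

definition left_prolongable :: "'a list set \<Rightarrow> 'a list \<Rightarrow> bool" where
  "left_prolongable L v \<longleftrightarrow> (\<exists>a. a # v \<in> L)"

definition right_prolongable :: "'a list set \<Rightarrow> 'a list \<Rightarrow> bool" where
  "right_prolongable L v \<longleftrightarrow> (\<exists>a. v @ [a] \<in> L)"

definition almost_prolongable :: "'a list set \<Rightarrow> bool" where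
  "almost_prolongable L \<longleftrightarrow>
     ((\<lambda>n. real (card {v \<in> Ln L n. left_prolongable L v}) / real (complexity L n))
        \<longlonglongrightarrow> 1) \<and>
     ((\<lambda>n. real (card {v \<in> Ln L n. right_prolongable L v}) / real (complexity L n))
        \<longlonglongrightarrow> 1)"

definition subexponential :: "(nat \<Rightarrow> nat) \<Rightarrow> bool" where
  "subexponential p \<longleftrightarrow> (\<lambda>n. ln (real (p n)) / real n) \<longlonglongrightarrow> 0"

text \<open>Rauzy graph R(n): vertex set Ln L n; one edge between take n w and drop 1 w for
  each w in Ln L (n+1) (loops and multiple edges allowed). The number of edges between
  two vertices x, y (a loop counted once):\<close>

definition rauzy_mult :: "'a list set \<Rightarrow> nat \<Rightarrow> 'a list \<Rightarrow> 'a list \<Rightarrow> nat" where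
  "rauzy_mult L n x y = card {w \<in> Ln L (Suc n).
      (take n w = x \<and> drop 1 w = y) \<or> (take n w = y \<and> drop 1 w = x)}"

definition rauzy_adj :: "'a list set \<Rightarrow> nat \<Rightarrow> 'a list \<Rightarrow> 'a list \<Rightarrow> bool" where
  "rauzy_adj L n x y \<longleftrightarrow> rauzy_mult L n x y > 0"

definition rauzy_ball :: "'a list set \<Rightarrow> nat \<Rightarrow> nat \<Rightarrow> 'a list \<Rightarrow> 'a list set" where
  "rauzy_ball L n r v = {u. \<exists>k\<le>r. (rauzy_adj L n ^^ k) v u}"

text \<open>The rooted ball of radius r around v (with all edges between its vertices)
  is isomorphic to the rooted ball of radius r in the bi-infinite path Z, i.e. the path
  -r, ..., r rooted at 0 with simple edges between consecutive integers and nothing else.\<close>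

definition ball_is_line :: "'a list set \<Rightarrow> nat \<Rightarrow> nat \<Rightarrow> 'a list \<Rightarrow> bool" where
  "ball_is_line L n r v \<longleftrightarrow>
     (\<exists>f :: int \<Rightarrow> 'a list.
        bij_betw f {- int r..int r} (rauzy_ball L n r v) \<and> f 0 = v \<and>
        (\<forall>i\<in>{- int r..int r}. \<forall>j\<in>{- int r..int r}.
            rauzy_mult L n (f i) (f j) = (if \<bar>i - j\<bar> = 1 then 1 else 0)))"

definition converges_to_Z :: "'a list set \<Rightarrow> (nat \<Rightarrow> nat) \<Rightarrow> bool" where
  "converges_to_Z L nd \<longleftrightarrow>
     (\<forall>r. (\<lambda>d. real (card {v \<in> Ln L (nd d). ball_is_line L (nd d) r v})
               / real (card (Ln L (nd d)))) \<longlonglongrightarrow> 1)"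

end

theory Submission
  imports Defs
begin

text \<open>Call a word nonspecial if it has exactly one left and one right extension. A nonspecial
  vertex of \<open>R(n)\<close> has exactly two edges, leading to the words obtained by shifting along its
  unique extensions. Hence if the forward and backward shift orbits of \<open>v\<close> stay nonspecial for
  \<open>2r + 2\<close> steps and \<open>v\<close> has no period \<open>\<le> 2r + 2\<close>, the ball of radius \<open>r\<close> around \<open>v\<close> is a path.
  Counting extensions bounds the number of remaining vertices by
  \<open>O(r) (p(n+1) - p(n)) + O(r) \<cdot> #{non-prolongable words} + C(r)\<close>. Unbounded subexponential
  growth gives arbitrarily large \<open>n\<close> with \<open>p(n) > d\<close> and \<open>p(n+1) \<le> (1 + 1/d) p(n)\<close>, and along
  such \<open>n\<close> the proportion of these vertices tends to \<open>0\<close>.\<close>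

lemma finite_Ln: "finite (Ln (L :: 'a::finite list set) n)"
proof -
  have "Ln L n \<subseteq> {xs. set xs \<subseteq> UNIV \<and> length xs = n}" unfolding Ln_def by auto
  thus ?thesis using finite_lists_length_eq[of "UNIV :: 'a set" n] finite_subset by auto
qed

lemma factorial_lang_Cons: "factorial_lang L \<Longrightarrow> a # u \<in> L \<Longrightarrow> u \<in> L"
  unfolding factorial_lang_def by (metis append.left_neutral append_Cons append_Nil2)

lemma factorial_lang_snoc: "factorial_lang L \<Longrightarrow> u @ [a] \<in> L \<Longrightarrow> u \<in> L"
  unfolding factorial_lang_def by (metis append.left_neutral)

lemma card_filter_add_card_filter_not:
  assumes "finite A"
  shows "card {x \<in> A. P x} + card {x \<in> A. \<not> P x} = card A"
proof -
  have "card ({x \<in> A. P x} \<union> {x \<in> A. \<not> P x}) = card {x \<in> A. P x} + card {x \<in> A. \<not> P x}"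
    by (rule card_Un_disjoint) (use assms in auto)
  moreover have "{x \<in> A. P x} \<union> {x \<in> A. \<not> P x} = A" by auto
  ultimately show ?thesis by simp
qed

definition left_ext :: "'a list set \<Rightarrow> 'a list \<Rightarrow> 'a set" where
  "left_ext L x = {a. a # x \<in> L}"

definition right_ext :: "'a list set \<Rightarrow> 'a list \<Rightarrow> 'a set" where
  "right_ext L x = {b. x @ [b] \<in> L}"

lemma sum_card_left_ext:
  assumes "factorial_lang (L :: 'a::finite list set)"
  shows "(\<Sum>u\<in>Ln L n. card (left_ext L u)) = card (Ln L (Suc n))"
proof -
  have "Ln L (Suc n) = (\<Union>u\<in>Ln L n. (\<lambda>a. a # u) ` left_ext L u)"
    using factorial_lang_Cons[OF assms]
    by (auto simp: Ln_def left_ext_def length_Suc_conv)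
  moreover have "card (\<Union>u\<in>Ln L n. (\<lambda>a. a # u) ` left_ext L u)
      = (\<Sum>u\<in>Ln L n. card ((\<lambda>a. a # u) ` left_ext L u))"
    by (rule card_UN_disjoint) (use finite_Ln in auto)
  ultimately show ?thesis by (auto simp: card_image inj_on_def intro!: sum.cong)
qed

lemma sum_card_right_ext:
  assumes "factorial_lang (L :: 'a::finite list set)"
  shows "(\<Sum>u\<in>Ln L n. card (right_ext L u)) = card (Ln L (Suc n))"
proof -
  have "Ln L (Suc n) = (\<Union>u\<in>Ln L n. (\<lambda>b. u @ [b]) ` right_ext L u)"
    using factorial_lang_snoc[OF assms]
    by (auto simp: Ln_def right_ext_def length_Suc_conv_rev)
  moreover have "card (\<Union>u\<in>Ln L n. (\<lambda>b. u @ [b]) ` right_ext L u)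
      = (\<Sum>u\<in>Ln L n. card ((\<lambda>b. u @ [b]) ` right_ext L u))"
    by (rule card_UN_disjoint) (use finite_Ln in auto)
  ultimately show ?thesis by (auto simp: card_image inj_on_def intro!: sum.cong)
qed

definition nonspecial :: "'a list set \<Rightarrow> nat \<Rightarrow> 'a list set" where
  "nonspecial L n = {x \<in> Ln L n. card (left_ext L x) = 1 \<and> card (right_ext L x) = 1}"

definition left_letter :: "'a list set \<Rightarrow> 'a list \<Rightarrow> 'a" where
  "left_letter L x = (SOME a. a # x \<in> L)"

definition right_letter :: "'a list set \<Rightarrow> 'a list \<Rightarrow> 'a" where
  "right_letter L x = (SOME b. x @ [b] \<in> L)"

text \<open>The two Rauzy neighbours of a word; they are meaningful only for nonspecial words,
  where the extending letter is unique.\<close>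

definition next_word :: "'a list set \<Rightarrow> 'a list \<Rightarrow> 'a list" where
  "next_word L x = tl (x @ [right_letter L x])"

definition prev_word :: "'a list set \<Rightarrow> 'a list \<Rightarrow> 'a list" where
  "prev_word L x = butlast (left_letter L x # x)"

lemma nonspecial_subset_Ln: "nonspecial L n \<subseteq> Ln L n"
  unfolding nonspecial_def by auto

lemma length_nonspecial: "x \<in> nonspecial L n \<Longrightarrow> length x = n"
  unfolding nonspecial_def Ln_def by auto

lemma nonspecial_snoc_iff:
  assumes "x \<in> nonspecial L n"
  shows "x @ [b] \<in> L \<longleftrightarrow> b = right_letter L x"
proof -
  obtain c where c: "right_ext L x = {c}"
    using assms by (auto simp: nonspecial_def card_1_singleton_iff)
  hence "x @ [right_letter L x] \<in> L"
    unfolding right_letter_def right_ext_def by (metis mem_Collect_eq singletonI someI)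
  with c show ?thesis unfolding right_ext_def by (metis mem_Collect_eq singleton_iff)
qed

lemma nonspecial_Cons_iff:
  assumes "x \<in> nonspecial L n"
  shows "a # x \<in> L \<longleftrightarrow> a = left_letter L x"
proof -
  obtain c where c: "left_ext L x = {c}"
    using assms by (auto simp: nonspecial_def card_1_singleton_iff)
  hence "left_letter L x # x \<in> L"
    unfolding left_letter_def left_ext_def by (metis mem_Collect_eq singletonI someI)
  with c show ?thesis unfolding left_ext_def by (metis mem_Collect_eq singleton_iff)
qed

lemma length_next_word [simp]: "length (next_word L x) = length x"
  unfolding next_word_def by simp

lemma drop_1_snoc_right_letter: "drop 1 (x @ [right_letter L x]) = next_word L x"
  by (cases x) (simp_all add: next_word_def)

lemma take_Cons_left_letter: "take (length x) (left_letter L x # x) = prev_word L x"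
  by (simp add: prev_word_def butlast_conv_take)

lemma nonspecial_extensions_in_Ln:
  assumes "x \<in> nonspecial L n"
  shows "x @ [right_letter L x] \<in> Ln L (Suc n)" and "left_letter L x # x \<in> Ln L (Suc n)"
  using nonspecial_snoc_iff[OF assms] nonspecial_Cons_iff[OF assms] length_nonspecial[OF assms]
  by (auto simp: Ln_def)

lemma prev_next_word:
  assumes "x \<in> nonspecial L n" "next_word L x \<in> nonspecial L n"
  shows "prev_word L (next_word L x) = x"
proof -
  have "x @ [right_letter L x] \<in> L" using nonspecial_snoc_iff[OF assms(1)] by simp
  moreover have "x @ [right_letter L x] = hd (x @ [right_letter L x]) # next_word L x"
    unfolding next_word_def by simp
  ultimately have "left_letter L (next_word L x) = hd (x @ [right_letter L x])"
    using nonspecial_Cons_iff[OF assms(2)] by metis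
  thus ?thesis unfolding prev_word_def next_word_def by (cases x) auto
qed

lemma next_prev_word:
  assumes "x \<in> nonspecial L n" "prev_word L x \<in> nonspecial L n"
  shows "next_word L (prev_word L x) = x"
proof -
  have "left_letter L x # x \<in> L" using nonspecial_Cons_iff[OF assms(1)] by simp
  moreover have "left_letter L x # x = prev_word L x @ [last (left_letter L x # x)]"
    unfolding prev_word_def by simp
  ultimately have "right_letter L (prev_word L x) = last (left_letter L x # x)"
    using nonspecial_snoc_iff[OF assms(2)] by metis
  thus ?thesis unfolding prev_word_def next_word_def by (cases x rule: rev_cases) auto
qed

lemma rauzy_edges_nonspecial:
  assumes "x \<in> nonspecial L n"
  shows "{w \<in> Ln L (Suc n). (take n w = x \<and> drop 1 w = y) \<or> (take n w = y \<and> drop 1 w = x)}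
    = (if y = next_word L x then {x @ [right_letter L x]} else {})
      \<union> (if y = prev_word L x then {left_letter L x # x} else {})"
proof -
  have len: "length x = n" by (rule length_nonspecial[OF assms])
  have take: "take n w = x \<longleftrightarrow> w = x @ [right_letter L x]" if "w \<in> Ln L (Suc n)" for w
  proof
    assume "take n w = x"
    then have "w = x @ [last w]"
      using that unfolding Ln_def
      by (metis (mono_tags) append_butlast_last_id butlast_conv_take diff_Suc_1 length_0_conv
          mem_Collect_eq nat.distinct(1))
    then show "w = x @ [right_letter L x]"
      using that nonspecial_snoc_iff[OF assms] unfolding Ln_def by (metis mem_Collect_eq)
  qed (use len in simp)
  have drop: "drop 1 w = x \<longleftrightarrow> w = left_letter L x # x" if "w \<in> Ln L (Suc n)" for w
  proof
    assume "drop 1 w = x"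
    then have "w = hd w # x" using that by (cases w) (auto simp: Ln_def)
    then show "w = left_letter L x # x"
      using that nonspecial_Cons_iff[OF assms] unfolding Ln_def by (metis mem_Collect_eq)
  qed simp
  show ?thesis
    using nonspecial_extensions_in_Ln[OF assms] drop_1_snoc_right_letter[where L = L and x = x]
      take_Cons_left_letter[where L = L and x = x] len take drop
    by (intro set_eqI) (smt (verit) Un_iff empty_iff mem_Collect_eq singleton_iff)
qed

lemma rauzy_adj_nonspecial_iff:
  fixes L :: "'a::finite list set"
  assumes "x \<in> nonspecial L n"
  shows "rauzy_adj L n x y \<longleftrightarrow> y = next_word L x \<or> y = prev_word L x"
  unfolding rauzy_adj_def rauzy_mult_def rauzy_edges_nonspecial[OF assms] by (auto simp: card_gt_0_iff)

lemma rauzy_mult_nonspecial: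
  assumes "x \<in> nonspecial L n" and "next_word L x \<noteq> prev_word L x"
  shows "rauzy_mult L n x y = (if y = next_word L x \<or> y = prev_word L x then 1 else 0)"
  unfolding rauzy_mult_def rauzy_edges_nonspecial[OF assms(1)] using assms(2) by auto

lemma relpowp_ball_eq_path_image:
  fixes R :: "'b \<Rightarrow> 'b \<Rightarrow> bool" and g :: "int \<Rightarrow> 'b"
  assumes nbrs: "\<And>i y. \<bar>i\<bar> < int r \<Longrightarrow> R (g i) y \<longleftrightarrow> y = g (i + 1) \<or> y = g (i - 1)"
  shows "{u. \<exists>k\<le>r. (R ^^ k) (g 0) u} = g ` {- int r..int r}"
proof (intro equalityI subsetI)
  have reach: "\<exists>i. \<bar>i\<bar> \<le> int k \<and> u = g i" if "k \<le> r" "(R ^^ k) (g 0) u" for k u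
    using that
  proof (induction k arbitrary: u)
    case (Suc k)
    then obtain u' i where "(R ^^ k) (g 0) u'" "R u' u" "\<bar>i\<bar> \<le> int k" "u' = g i"
      by (metis Suc_leD relpowp_Suc_E)
    moreover have "\<bar>i\<bar> < int r" using Suc.prems(1) \<open>\<bar>i\<bar> \<le> int k\<close> by linarith
    ultimately have "u = g (i + 1) \<or> u = g (i - 1)" using nbrs by blast
    moreover have "\<bar>i + 1\<bar> \<le> int (Suc k)" "\<bar>i - 1\<bar> \<le> int (Suc k)"
      using \<open>\<bar>i\<bar> \<le> int k\<close> by auto
    ultimately show ?case by blast
  qed auto
  fix u assume "u \<in> {u. \<exists>k\<le>r. (R ^^ k) (g 0) u}"
  then show "u \<in> g ` {- int r..int r}" using reach by force
next
  have walk: "(R ^^ k) (g 0) (g (int k)) \<and> (R ^^ k) (g 0) (g (- int k))" if "k \<le> r" for k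
    using that
  proof (induction k)
    case (Suc k)
    have "R (g (int k)) (g (int (Suc k)))"
      using nbrs[of "int k" "g (int k + 1)"] Suc.prems by (simp add: add.commute)
    moreover have "R (g (- int k)) (g (- int k - 1))"
      using nbrs[of "- int k"] Suc.prems by auto
    moreover have "- int k - 1 = - int (Suc k)" by simp
    ultimately show ?case using Suc by (metis Suc_leD relpowp_Suc_I)
  qed simp
  fix u assume "u \<in> g ` {- int r..int r}"
  then obtain i where "\<bar>i\<bar> \<le> int r" "u = g i" by (force simp: abs_le_iff)
  then show "u \<in> {u. \<exists>k\<le>r. (R ^^ k) (g 0) u}"
    using walk[of "nat \<bar>i\<bar>"] by (cases "0 \<le> i") (auto intro!: exI[of _ "nat \<bar>i\<bar>"])
qed

definition walk :: "'a list set \<Rightarrow> 'a list \<Rightarrow> int \<Rightarrow> 'a list" where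
  "walk L v i = (if 0 \<le> i then (next_word L ^^ nat i) v else (prev_word L ^^ nat (- i)) v)"

lemma walk_0 [simp]: "walk L v 0 = v"
  unfolding walk_def by simp

lemma walk_of_nat: "walk L v (int t) = (next_word L ^^ t) v"
  unfolding walk_def by simp

lemma walk_add_1_nonneg: "0 \<le> i \<Longrightarrow> walk L v (i + 1) = next_word L (walk L v i)"
proof -
  assume "0 \<le> i"
  then have "nat (i + 1) = Suc (nat i)" by simp
  with \<open>0 \<le> i\<close> show ?thesis by (simp add: walk_def)
qed

lemma walk_neg: "i < 0 \<Longrightarrow> walk L v i = prev_word L (walk L v (i + 1))"
proof (cases "i = - 1")
  case False
  assume "i < 0"
  with False have "nat (- i) = Suc (nat (- (i + 1)))" by simp
  with \<open>i < 0\<close> False show ?thesis by (simp add: walk_def)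
qed (simp add: walk_def)

lemma walk_step:
  assumes window: "walk L v ` {- K..K} \<subseteq> nonspecial L n" and "- K \<le> i" "i < K"
  shows "walk L v (i + 1) = next_word L (walk L v i)"
    and "walk L v i = prev_word L (walk L v (i + 1))"
proof -
  have ns: "walk L v i \<in> nonspecial L n" "walk L v (i + 1) \<in> nonspecial L n"
    using window assms(2,3) by (simp_all add: image_subset_iff)
  show "walk L v (i + 1) = next_word L (walk L v i)"
  proof (cases "0 \<le> i")
    case False
    then show ?thesis using walk_neg[of i L v] next_prev_word[OF ns(2)] ns(1) by simp
  qed (rule walk_add_1_nonneg)
  show "walk L v i = prev_word L (walk L v (i + 1))"
  proof (cases "0 \<le> i")
    case True
    then show ?thesis using walk_add_1_nonneg[of i L v] prev_next_word[OF ns(1)] ns(2) by simp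
  qed (simp add: walk_neg)
qed

lemma walk_add:
  assumes window: "walk L v ` {- K..K} \<subseteq> nonspecial L n" and "- K \<le> i" "i + int t \<le> K"
  shows "walk L v (i + int t) = (next_word L ^^ t) (walk L v i)"
  using assms(3)
proof (induction t)
  case (Suc t)
  have "walk L v (i + int (Suc t)) = walk L v (i + int t + 1)" by (simp add: algebra_simps)
  also have "\<dots> = next_word L (walk L v (i + int t))"
    by (rule walk_step(1)[OF window]) (use assms(2) Suc.prems in auto)
  finally show ?case using Suc by simp
qed simp

lemma walk_diff:
  assumes window: "walk L v ` {- K..K} \<subseteq> nonspecial L n" and "i \<le> K" "- K \<le> i - int t"
  shows "walk L v (i - int t) = (prev_word L ^^ t) (walk L v i)"
  using assms(3)
proof (induction t)
  case (Suc t)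
  have "walk L v (i - int (Suc t)) = prev_word L (walk L v (i - int (Suc t) + 1))"
    by (rule walk_step(2)[OF window]) (use assms(2) Suc.prems in auto)
  also have "i - int (Suc t) + 1 = i - int t" by simp
  finally show ?case using Suc by simp
qed simp

text \<open>Two equal words at positions \<open>i < j\<close> of the walk can be moved back to position \<open>0\<close>
  (along \<open>next_word\<close> if \<open>i \<le> 0\<close>, along \<open>prev_word\<close> otherwise), which makes \<open>v\<close> periodic.\<close>

lemma walk_inj_on:
  assumes window: "walk L v ` {- (2 * int R)..2 * int R} \<subseteq> nonspecial L n"
    and aperiodic: "\<And>m. 1 \<le> m \<Longrightarrow> m \<le> 2 * R \<Longrightarrow> (next_word L ^^ m) v \<noteq> v"
  shows "inj_on (walk L v) {- int R..int R}"
proof (rule linorder_inj_onI')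
  fix i j assume ij: "i \<in> {- int R..int R}" "j \<in> {- int R..int R}" "i < j"
  define m where "m = nat (j - i)"
  have m: "1 \<le> m" "m \<le> 2 * R" "j - i = int m" using ij unfolding m_def by auto
  have walk_diff_eq: "walk L v (j - i) = (next_word L ^^ m) v" using m(3) walk_of_nat by metis
  show "walk L v i \<noteq> walk L v j"
  proof
    assume eq: "walk L v i = walk L v j"
    have "v = walk L v (j - i)"
    proof (cases "i \<le> 0")
      case True
      then have "walk L v (i + int (nat (- i))) = (next_word L ^^ nat (- i)) (walk L v i)"
        "walk L v (j + int (nat (- i))) = (next_word L ^^ nat (- i)) (walk L v j)"
        using ij by (intro walk_add[OF window]; simp)+
      with True eq show ?thesis by simp
    next
      case False
      then have "walk L v (i - int (nat i)) = (prev_word L ^^ nat i) (walk L v i)"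
        "walk L v (j - int (nat i)) = (prev_word L ^^ nat i) (walk L v j)"
        using ij by (intro walk_diff[OF window]; simp)+
      with False eq show ?thesis by simp
    qed
    with walk_diff_eq have "(next_word L ^^ m) v = v" by simp
    with aperiodic m show False by blast
  qed
qed

lemma ball_is_line_if_walk_nonspecial:
  fixes L :: "'a::finite list set"
  assumes window: "walk L v ` {- (2 * int r + 2)..2 * int r + 2} \<subseteq> nonspecial L n"
    and aperiodic: "\<And>m. 1 \<le> m \<Longrightarrow> m \<le> 2 * r + 2 \<Longrightarrow> (next_word L ^^ m) v \<noteq> v"
  shows "ball_is_line L n r v"
proof -
  have inj: "inj_on (walk L v) {- int (r + 1)..int (r + 1)}"
    by (rule walk_inj_on) (use window aperiodic in auto)
  have ns: "walk L v i \<in> nonspecial L n"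
    and nbrs: "next_word L (walk L v i) = walk L v (i + 1)" "prev_word L (walk L v i) = walk L v (i - 1)"
    if "\<bar>i\<bar> \<le> int r" for i
  proof -
    have "i \<in> {- (2 * int r + 2)..2 * int r + 2}" using that by auto
    then show "walk L v i \<in> nonspecial L n" using window by blast
    show "next_word L (walk L v i) = walk L v (i + 1)"
      by (rule walk_step(1)[OF window, symmetric]) (use that in auto)
    show "prev_word L (walk L v i) = walk L v (i - 1)"
      using walk_step(2)[OF window, of "i - 1"] that by auto
  qed
  have "rauzy_ball L n r v = walk L v ` {- int r..int r}"
    unfolding rauzy_ball_def
    using relpowp_ball_eq_path_image[where R = "rauzy_adj L n" and g = "walk L v" and r = r]
    by (simp add: rauzy_adj_nonspecial_iff ns nbrs)
  moreover have "inj_on (walk L v) {- int r..int r}"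
    by (rule inj_on_subset[OF inj]) auto
  moreover have "rauzy_mult L n (walk L v i) (walk L v j) = (if \<bar>i - j\<bar> = 1 then 1 else 0)"
    if "i \<in> {- int r..int r}" "j \<in> {- int r..int r}" for i j
  proof -
    have "walk L v (i + 1) \<noteq> walk L v (i - 1)"
      and "walk L v j = walk L v (i + 1) \<longleftrightarrow> j = i + 1"
      and "walk L v j = walk L v (i - 1) \<longleftrightarrow> j = i - 1"
      using that inj_on_eq_iff[OF inj] by auto
    with that show ?thesis
      using rauzy_mult_nonspecial[of "walk L v i"] ns nbrs by auto
  qed
  ultimately show ?thesis
    unfolding ball_is_line_def by (intro exI[of _ "walk L v"]) (simp add: inj_on_imp_bij_betw)
qed

lemma funpow_cancel_along_orbit:
  assumes cancel: "\<And>x. x \<in> G \<Longrightarrow> s x \<in> G \<Longrightarrow> t (s x) = x"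
    and orbit: "\<And>i. i \<le> j \<Longrightarrow> (s ^^ i) v \<in> G"
  shows "(t ^^ j) ((s ^^ j) v) = v"
  using orbit
proof (induction j)
  case (Suc j)
  have "(t ^^ Suc j) ((s ^^ Suc j) v) = (t ^^ j) (t (s ((s ^^ j) v)))"
    by (simp only: funpow_Suc_right[where f = t] funpow.simps(2)[where f = s] o_apply)
  also have "t (s ((s ^^ j) v)) = (s ^^ j) v"
    using cancel Suc.prems[of j] Suc.prems[of "Suc j"] by simp
  finally show ?case using Suc by simp
qed simp

text \<open>If the orbit of \<open>v\<close> first leaves \<open>G\<close> at step \<open>j + 1\<close>, then \<open>v\<close> is recovered from the
  exit point \<open>(s ^^ j) v\<close> by \<open>t ^^ j\<close>.\<close>

lemma card_orbit_leaves_le: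
  assumes "finite V" "G \<subseteq> V" and cancel: "\<And>x. x \<in> G \<Longrightarrow> s x \<in> G \<Longrightarrow> t (s x) = x"
  shows "card {v \<in> V. \<exists>k\<le>K. (s ^^ k) v \<notin> G} \<le> card (V - G) + K * card {x \<in> G. s x \<notin> G}"
proof -
  let ?X = "{x \<in> G. s x \<notin> G}"
  have cover: "{v \<in> V. \<exists>k\<le>K. (s ^^ k) v \<notin> G} \<subseteq> (V - G) \<union> (\<Union>j<K. (t ^^ j) ` ?X)"
  proof
    fix v assume "v \<in> {v \<in> V. \<exists>k\<le>K. (s ^^ k) v \<notin> G}"
    then obtain k where v: "v \<in> V" and k: "k \<le> K" "(s ^^ k) v \<notin> G" by blast
    define k0 where "k0 = (LEAST k. (s ^^ k) v \<notin> G)"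
    have k0: "(s ^^ k0) v \<notin> G" "k0 \<le> k"
      unfolding k0_def by (rule LeastI[of _ k], rule k(2), rule Least_le, rule k(2))
    have before: "(s ^^ i) v \<in> G" if "i < k0" for i
      using not_less_Least[of i] that unfolding k0_def by blast
    show "v \<in> (V - G) \<union> (\<Union>j<K. (t ^^ j) ` ?X)"
    proof (cases k0)
      case 0
      then show ?thesis using k0 v by auto
    next
      case (Suc j)
      then have "(s ^^ j) v \<in> ?X" using before[of j] k0(1) by auto
      moreover have "(t ^^ j) ((s ^^ j) v) = v"
        by (rule funpow_cancel_along_orbit[where G = G and s = s and t = t])
          (use cancel before Suc in auto)
      ultimately have "v \<in> (t ^^ j) ` ?X" by (metis image_eqI)
      moreover have "j < K" using Suc k0(2) k(1) by simp
      ultimately show ?thesis by blast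
    qed
  qed
  have "finite ?X" using assms(1,2) by (metis (no_types, lifting) finite_subset mem_Collect_eq subsetI)
  have "card {v \<in> V. \<exists>k\<le>K. (s ^^ k) v \<notin> G} \<le> card ((V - G) \<union> (\<Union>j<K. (t ^^ j) ` ?X))"
    by (rule card_mono[OF _ cover]) (use assms(1) \<open>finite ?X\<close> in auto)
  also have "\<dots> \<le> card (V - G) + card (\<Union>j<K. (t ^^ j) ` ?X)"
    by (rule card_Un_le)
  also have "card (\<Union>j<K. (t ^^ j) ` ?X) \<le> (\<Sum>j<K. card ((t ^^ j) ` ?X))"
    by (rule card_UN_le) simp
  also have "\<dots> \<le> (\<Sum>j<K. card ?X)"
    by (rule sum_mono) (rule card_image_le[OF \<open>finite ?X\<close>])
  finally show ?thesis by simp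
qed

lemma length_funpow_next_word [simp]: "length ((next_word L ^^ k) x) = length x"
  by (induction k) simp_all

lemma nth_funpow_next_word: "t + k < length x \<Longrightarrow> (next_word L ^^ k) x ! t = x ! (t + k)"
proof (induction k arbitrary: x t)
  case (Suc k)
  have "(next_word L ^^ Suc k) x ! t = (next_word L ^^ k) (next_word L x) ! t"
    by (simp add: funpow_Suc_right del: funpow.simps)
  also have "\<dots> = next_word L x ! (t + k)" using Suc by simp
  also have "\<dots> = x ! (t + Suc k)"
    using Suc.prems by (cases x) (auto simp: next_word_def nth_append)
  finally show ?case .
qed simp

lemma nth_mod_if_funpow_next_word_fixed:
  assumes "(next_word L ^^ m) v = v" "0 < m" "t < length v"
  shows "v ! t = v ! (t mod m)"
  using assms(3)
proof (induction t rule: less_induct)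
  case (less t)
  show ?case
  proof (cases "t < m")
    case False
    then have "v ! t = (next_word L ^^ m) v ! (t - m)"
      using nth_funpow_next_word[of "t - m" m v L] less.prems by simp
    also have "\<dots> = v ! ((t - m) mod m)"
      using assms(1,2) less False by simp
    finally show ?thesis using False by (simp add: le_mod_geq)
  qed simp
qed

lemma card_periodic_le:
  fixes L :: "'a::finite list set"
  assumes "M \<le> n"
  shows "card {v \<in> Ln L n. \<exists>m. 1 \<le> m \<and> m \<le> M \<and> (next_word L ^^ m) v = v}
    \<le> (\<Sum>m=1..M. card (UNIV :: 'a set) ^ m)"
proof -
  let ?S = "\<lambda>m. {v \<in> Ln L n. (next_word L ^^ m) v = v}"
  have "card (?S m) \<le> card (UNIV :: 'a set) ^ m" if m: "m \<in> {1..M}" for m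
  proof -
    have "inj_on (take m) (?S m)"
    proof (rule inj_onI)
      fix v w assume v: "v \<in> ?S m" and w: "w \<in> ?S m" and eq: "take m v = take m w"
      have len: "length v = n" "length w = n" using v w by (auto simp: Ln_def)
      show "v = w"
      proof (rule nth_equalityI)
        fix t assume t: "t < length v"
        have m_pos: "0 < m" and "t mod m < m" using m by auto
        have "v ! t = take m v ! (t mod m)"
          using nth_mod_if_funpow_next_word_fixed[of m L v t] v m_pos t \<open>t mod m < m\<close> by simp
        also have "\<dots> = w ! t"
          using nth_mod_if_funpow_next_word_fixed[of m L w t] w m_pos t len eq \<open>t mod m < m\<close> by simp
        finally show "v ! t = w ! t" .
      qed (use len in simp)
    qed
    then have "card (?S m) \<le> card {xs. set xs \<subseteq> (UNIV :: 'a set) \<and> length xs = m}"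
      by (rule card_inj_on_le)
        (use m assms finite_lists_length_eq[of "UNIV :: 'a set" m] in \<open>auto simp: Ln_def\<close>)
    then show ?thesis using card_lists_length_eq[of "UNIV :: 'a set" m] by simp
  qed
  then have "(\<Sum>m=1..M. card (?S m)) \<le> (\<Sum>m=1..M. card (UNIV :: 'a set) ^ m)"
    by (rule sum_mono)
  moreover have "card (\<Union>m\<in>{1..M}. ?S m) \<le> (\<Sum>m=1..M. card (?S m))"
    by (rule card_UN_le) simp
  moreover have "card {v \<in> Ln L n. \<exists>m. 1 \<le> m \<and> m \<le> M \<and> (next_word L ^^ m) v = v}
      \<le> card (\<Union>m\<in>{1..M}. ?S m)"
    by (rule card_mono) (use finite_Ln[of L n] in auto)
  ultimately show ?thesis by linarith
qed

lemma card_next_word_leaves_nonspecial: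
  fixes L :: "'a::finite list set"
  shows "card {x \<in> nonspecial L n. next_word L x \<notin> nonspecial L n} + card (nonspecial L n)
    \<le> card (Ln L (Suc n))"
proof -
  let ?E = "Ln L (Suc n)" and ?G = "nonspecial L n"
  have drop_right: "drop (Suc 0) (x @ [right_letter L x]) = next_word L x" for x
    using drop_1_snoc_right_letter[where L = L and x = x] by simp
  have "card {x \<in> ?G. next_word L x \<notin> ?G} \<le> card {w \<in> ?E. drop 1 w \<notin> ?G}"
    by (rule card_inj_on_le[where f = "\<lambda>x. x @ [right_letter L x]"])
      (auto simp: inj_on_def nonspecial_extensions_in_Ln drop_right finite_Ln simp del: drop_append)
  moreover have "card ?G \<le> card {w \<in> ?E. drop 1 w \<in> ?G}"
    by (rule card_inj_on_le[where f = "\<lambda>x. left_letter L x # x"])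
      (auto simp: inj_on_def nonspecial_extensions_in_Ln finite_Ln)
  moreover have "card {w \<in> ?E. drop 1 w \<in> ?G} + card {w \<in> ?E. drop 1 w \<notin> ?G} = card ?E"
    by (rule card_filter_add_card_filter_not[OF finite_Ln])
  ultimately show ?thesis by linarith
qed

lemma card_prev_word_leaves_nonspecial:
  fixes L :: "'a::finite list set"
  shows "card {x \<in> nonspecial L n. prev_word L x \<notin> nonspecial L n} + card (nonspecial L n)
    \<le> card (Ln L (Suc n))"
proof -
  let ?E = "Ln L (Suc n)" and ?G = "nonspecial L n"
  have take_left: "take n (left_letter L x # x) = prev_word L x"
    and take_right: "take n (x @ [right_letter L x]) = x" if "x \<in> ?G" for x
    using take_Cons_left_letter[where L = L and x = x] length_nonspecial[OF that] by simp_all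
  have "card {x \<in> ?G. prev_word L x \<notin> ?G} \<le> card {w \<in> ?E. take n w \<notin> ?G}"
    by (rule card_inj_on_le[where f = "\<lambda>x. left_letter L x # x"])
      (auto simp: inj_on_def nonspecial_extensions_in_Ln take_left finite_Ln)
  moreover have "card ?G \<le> card {w \<in> ?E. take n w \<in> ?G}"
    by (rule card_inj_on_le[where f = "\<lambda>x. x @ [right_letter L x]"])
      (auto simp: inj_on_def nonspecial_extensions_in_Ln take_right finite_Ln simp del: take_append)
  moreover have "card {w \<in> ?E. take n w \<in> ?G} + card {w \<in> ?E. take n w \<notin> ?G} = card ?E"
    by (rule card_filter_add_card_filter_not[OF finite_Ln])
  ultimately show ?thesis by linarith
qed

text \<open>A prolongable word has at least one extension on each side, and at least three in total
  unless it is nonspecial; summing the extension counts over words of length \<open>n\<close> gives \<open>2 p(n+1)\<close>.\<close>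

lemma three_card_Ln_le:
  fixes L :: "'a::finite list set"
  assumes "factorial_lang L"
  shows "3 * card (Ln L n) \<le> card (nonspecial L n) + 2 * card (Ln L (Suc n))
    + 3 * card {v \<in> Ln L n. \<not> left_prolongable L v} + 3 * card {v \<in> Ln L n. \<not> right_prolongable L v}"
proof -
  let ?V = "Ln L n" and ?G = "nonspecial L n"
  let ?f = "\<lambda>v. card (left_ext L v) + card (right_ext L v) + (if v \<in> ?G then 1 else 0)
    + (if \<not> left_prolongable L v then 3 else 0) + (if \<not> right_prolongable L v then 3 else 0)"
  have pointwise: "3 \<le> ?f v" if "v \<in> ?V" for v
  proof (cases "left_prolongable L v \<and> right_prolongable L v")
    case True
    then have "left_ext L v \<noteq> {}" "right_ext L v \<noteq> {}"
      by (auto simp: left_prolongable_def right_prolongable_def left_ext_def right_ext_def)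
    then have "1 \<le> card (left_ext L v)" "1 \<le> card (right_ext L v)"
      by (simp_all add: Suc_le_eq card_gt_0_iff)
    moreover have "v \<in> ?G" if "card (left_ext L v) = 1" "card (right_ext L v) = 1"
      using that \<open>v \<in> ?V\<close> by (simp add: nonspecial_def)
    ultimately show ?thesis by fastforce
  qed auto
  have "3 * card ?V \<le> (\<Sum>v\<in>?V. ?f v)"
    using sum_mono[of ?V "\<lambda>_. 3" ?f] pointwise by simp
  also have "\<dots> = 2 * card (Ln L (Suc n)) + card {v \<in> ?V. v \<in> ?G}
      + 3 * card {v \<in> ?V. \<not> left_prolongable L v} + 3 * card {v \<in> ?V. \<not> right_prolongable L v}"
    by (simp add: sum.distrib sum.inter_filter[symmetric] finite_Ln
        sum_card_left_ext[OF assms] sum_card_right_ext[OF assms])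
  also have "{v \<in> ?V. v \<in> ?G} = ?G" using nonspecial_subset_Ln by blast
  finally show ?thesis by simp
qed

lemma card_not_line_le_orbits:
  fixes L :: "'a::finite list set"
  shows "card {v \<in> Ln L n. \<not> ball_is_line L n r v}
    \<le> card {v \<in> Ln L n. \<exists>k\<le>2 * r + 2. (next_word L ^^ k) v \<notin> nonspecial L n}
      + card {v \<in> Ln L n. \<exists>k\<le>2 * r + 2. (prev_word L ^^ k) v \<notin> nonspecial L n}
      + card {v \<in> Ln L n. \<exists>m. 1 \<le> m \<and> m \<le> 2 * r + 2 \<and> (next_word L ^^ m) v = v}"
    (is "card ?B \<le> card ?Next + card ?Prev + card ?Per")
proof -
  have "?B \<subseteq> ?Next \<union> ?Prev \<union> ?Per"
  proof
    fix v assume "v \<in> ?B"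
    show "v \<in> ?Next \<union> ?Prev \<union> ?Per"
    proof (rule ccontr)
      assume "v \<notin> ?Next \<union> ?Prev \<union> ?Per"
      with \<open>v \<in> ?B\<close> have next_ns: "\<And>k. k \<le> 2 * r + 2 \<Longrightarrow> (next_word L ^^ k) v \<in> nonspecial L n"
        and prev_ns: "\<And>k. k \<le> 2 * r + 2 \<Longrightarrow> (prev_word L ^^ k) v \<in> nonspecial L n"
        and aperiodic: "\<And>m. 1 \<le> m \<Longrightarrow> m \<le> 2 * r + 2 \<Longrightarrow> (next_word L ^^ m) v \<noteq> v"
        by auto
      have "walk L v i \<in> nonspecial L n" if "i \<in> {- (2 * int r + 2)..2 * int r + 2}" for i
        using that next_ns[of "nat i"] prev_ns[of "nat (- i)"] by (auto simp: walk_def)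
      then have "ball_is_line L n r v"
        by (intro ball_is_line_if_walk_nonspecial aperiodic) blast
      with \<open>v \<in> ?B\<close> show False by simp
    qed
  qed
  then have "card ?B \<le> card (?Next \<union> ?Prev \<union> ?Per)"
    by (rule card_mono[rotated]) (simp add: finite_Ln)
  also have "\<dots> \<le> card ?Next + card ?Prev + card ?Per"
    by (meson add_le_mono card_Un_le le_refl order_trans)
  finally show ?thesis .
qed

lemma card_not_line_le:
  fixes L :: "'a::finite list set"
  assumes fac: "factorial_lang L" and "2 * r + 2 \<le> n"
  shows "real (card {v \<in> Ln L n. \<not> ball_is_line L n r v})
    \<le> (16 + 12 * real r) * (real (card (Ln L (Suc n))) - real (card (Ln L n)))
      + (18 + 12 * real r) * real (card {v \<in> Ln L n. \<not> left_prolongable L v}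
                                   + card {v \<in> Ln L n. \<not> right_prolongable L v})
      + real (\<Sum>m=1..2 * r + 2. card (UNIV :: 'a set) ^ m)"
proof -
  define K where "K = 2 * r + 2"
  let ?V = "Ln L n" and ?G = "nonspecial L n"
  define P q g N where "P = card ?V" and "q = card (Ln L (Suc n))" and "g = card ?G"
    and "N = card {v \<in> ?V. \<not> left_prolongable L v} + card {v \<in> ?V. \<not> right_prolongable L v}"
  define e\<^sub>n e\<^sub>p where "e\<^sub>n = card {x \<in> ?G. next_word L x \<notin> ?G}" and "e\<^sub>p = card {x \<in> ?G. prev_word L x \<notin> ?G}"
  have GV: "?G \<subseteq> ?V" by (rule nonspecial_subset_Ln)
  then have diff: "card (?V - ?G) + g = P"
    unfolding g_def P_def by (metis card_Diff_subset card_mono finite_Ln finite_subset le_add_diff_inverse2)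
  have "card {v \<in> ?V. \<not> ball_is_line L n r v}
      \<le> card {v \<in> ?V. \<exists>k\<le>K. (next_word L ^^ k) v \<notin> ?G} + card {v \<in> ?V. \<exists>k\<le>K. (prev_word L ^^ k) v \<notin> ?G}
        + (\<Sum>m=1..K. card (UNIV :: 'a set) ^ m)"
    using card_not_line_le_orbits[of L n r] card_periodic_le[of K n L] assms(2) unfolding K_def by linarith
  also have "\<dots> \<le> (card (?V - ?G) + K * e\<^sub>n) + (card (?V - ?G) + K * e\<^sub>p) + (\<Sum>m=1..K. card (UNIV :: 'a set) ^ m)"
    unfolding e\<^sub>n_def e\<^sub>p_def
    using card_orbit_leaves_le[OF finite_Ln GV, where s = "next_word L" and t = "prev_word L"]
      card_orbit_leaves_le[OF finite_Ln GV, where s = "prev_word L" and t = "next_word L"]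
    by (simp add: prev_next_word next_prev_word add_mono)
  finally have "real (card {v \<in> ?V. \<not> ball_is_line L n r v})
      \<le> real ((card (?V - ?G) + K * e\<^sub>n) + (card (?V - ?G) + K * e\<^sub>p) + (\<Sum>m=1..K. card (UNIV :: 'a set) ^ m))"
    by (rule of_nat_mono)
  moreover have "real (card (?V - ?G)) = real P - real g" using diff by linarith
  moreover have "real K = 2 * real r + 2" unfolding K_def by simp
  ultimately have orbits: "real (card {v \<in> ?V. \<not> ball_is_line L n r v})
      \<le> 2 * real P - 2 * real g + (2 * real r + 2) * (real e\<^sub>n + real e\<^sub>p)
        + real (\<Sum>m=1..K. card (UNIV :: 'a set) ^ m)"
    by (simp add: algebra_simps)
  have "real (e\<^sub>n + g) \<le> real q" "real (e\<^sub>p + g) \<le> real q"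
    using card_next_word_leaves_nonspecial[of L n] card_prev_word_leaves_nonspecial[of L n]
    unfolding e\<^sub>n_def e\<^sub>p_def q_def g_def of_nat_le_iff .
  then have exits: "real e\<^sub>n + real e\<^sub>p \<le> 2 * real q - 2 * real g"
    by linarith
  have "real (3 * P) \<le> real (g + 2 * q + 3 * N)"
    using three_card_Ln_le[OF fac, of n] unfolding P_def q_def g_def N_def of_nat_le_iff
    by (simp add: algebra_simps)
  then have degree: "3 * real P \<le> real g + 2 * real q + 3 * real N"
    by simp
  have "(2 * real r + 2) * (real e\<^sub>n + real e\<^sub>p) \<le> (2 * real r + 2) * (6 * (real q - real P) + 6 * real N)"
    using exits degree by (intro mult_left_mono) auto
  with orbits degree show ?thesis
    unfolding K_def P_def q_def N_def g_def by (simp add: algebra_simps)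
qed

lemma subexponential_not_geometric:
  fixes p :: "nat \<Rightarrow> nat"
  assumes subexp: "(\<lambda>n. ln (real (p n)) / real n) \<longlonglongrightarrow> 0" and "0 < \<epsilon>" and "1 \<le> p n\<^sub>0"
  shows "\<exists>t. real (p (n\<^sub>0 + t)) < (1 + \<epsilon>) ^ t * real (p n\<^sub>0)"
proof (rule ccontr)
  assume "\<not> ?thesis"
  then have "(1 + \<epsilon>) ^ t * real (p n\<^sub>0) \<le> real (p (n\<^sub>0 + t))" for t
    by (simp add: not_less)
  moreover have "(1 + \<epsilon>) ^ t \<le> (1 + \<epsilon>) ^ t * real (p n\<^sub>0)" for t
    using \<open>1 \<le> p n\<^sub>0\<close> \<open>0 < \<epsilon>\<close> by (simp add: mult_le_cancel_left1)
  ultimately have geometric: "(1 + \<epsilon>) ^ t \<le> real (p (n\<^sub>0 + t))" for t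
    using order_trans by blast
  define c where "c = ln (1 + \<epsilon>)"
  have "0 < c" unfolding c_def using \<open>0 < \<epsilon>\<close> by simp
  then obtain N where N: "\<And>n. N \<le> n \<Longrightarrow> ln (real (p n)) / real n < c / 2"
    using order_tendstoD(2)[OF subexp, of "c / 2"] by (auto simp: eventually_sequentially)
  \<comment> \<open>Since \<open>n\<^sub>0 + t \<le> 2 t\<close>, geometric growth forces \<open>ln p(n\<^sub>0 + t) / (n\<^sub>0 + t) \<ge> c / 2\<close>.\<close>
  define t where "t = n\<^sub>0 + N + 1"
  have "real t * c = ln ((1 + \<epsilon>) ^ t)"
    unfolding c_def using \<open>0 < \<epsilon>\<close> by (simp add: ln_realpow)
  also have "\<dots> \<le> ln (real (p (n\<^sub>0 + t)))"
  proof -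
    have "0 < (1 + \<epsilon>) ^ t" using \<open>0 < \<epsilon>\<close> by simp
    with geometric[of t] show ?thesis by (subst ln_le_cancel_iff) auto
  qed
  finally have "real t * c / real (n\<^sub>0 + t) \<le> ln (real (p (n\<^sub>0 + t))) / real (n\<^sub>0 + t)"
    by (simp add: divide_right_mono)
  moreover have "c / 2 \<le> real t * c / real (n\<^sub>0 + t)"
    using \<open>0 < c\<close> by (simp add: t_def field_simps)
  ultimately show False using N[of "n\<^sub>0 + t"] unfolding t_def by linarith
qed

lemma exists_slow_growth_step:
  fixes p :: "nat \<Rightarrow> nat"
  assumes unbounded: "\<not> bdd_above (range p)"
    and subexp: "(\<lambda>n. ln (real (p n)) / real n) \<longlonglongrightarrow> 0" and "0 < \<epsilon>"
  shows "\<exists>n\<ge>N. M \<le> p n \<and> real (p (Suc n)) \<le> (1 + \<epsilon>) * real (p n)"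
proof (rule ccontr)
  assume contra: "\<not> ?thesis"
  have fast: "(1 + \<epsilon>) * real (p n) < real (p (Suc n))" if "N \<le> n" "M \<le> p n" for n
  proof (rule ccontr)
    assume "\<not> ?thesis"
    with that contra show False by (simp add: not_less)
  qed
  have "\<exists>n. M + 1 + (\<Sum>i<N. p i) < p n"
  proof (rule ccontr)
    assume "\<nexists>n. M + 1 + (\<Sum>i<N. p i) < p n"
    then have "bdd_above (range p)"
      by (intro bdd_aboveI2[where M = "M + 1 + (\<Sum>i<N. p i)"]) (simp add: not_less)
    with unbounded show False by contradiction
  qed
  then obtain n\<^sub>0 where n\<^sub>0: "M + 1 + (\<Sum>i<N. p i) < p n\<^sub>0" ..
  have "N \<le> n\<^sub>0"
  proof (rule ccontr)
    assume "\<not> N \<le> n\<^sub>0"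
    then have "p n\<^sub>0 \<le> (\<Sum>i<N. p i)" by (intro member_le_sum) auto
    with n\<^sub>0 show False by simp
  qed
  have "(1 + \<epsilon>) ^ t * real (p n\<^sub>0) \<le> real (p (n\<^sub>0 + t))" for t
  proof (induction t)
    case (Suc t)
    have "real (p n\<^sub>0) \<le> (1 + \<epsilon>) ^ t * real (p n\<^sub>0)"
      using \<open>0 < \<epsilon>\<close> by (simp add: mult_le_cancel_right1)
    with Suc n\<^sub>0 have "M \<le> p (n\<^sub>0 + t)" by linarith
    with \<open>N \<le> n\<^sub>0\<close> have "(1 + \<epsilon>) * real (p (n\<^sub>0 + t)) < real (p (n\<^sub>0 + Suc t))"
      using fast[of "n\<^sub>0 + t"] by simp
    moreover have "(1 + \<epsilon>) * ((1 + \<epsilon>) ^ t * real (p n\<^sub>0)) \<le> (1 + \<epsilon>) * real (p (n\<^sub>0 + t))"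
      using Suc \<open>0 < \<epsilon>\<close> by (intro mult_left_mono) auto
    ultimately show ?case by simp
  qed simp
  moreover have "1 \<le> p n\<^sub>0" using n\<^sub>0 by simp
  ultimately show False
    using subexponential_not_geometric[OF subexp \<open>0 < \<epsilon>\<close>] not_le by blast
qed

lemma exists_slowly_growing_subseq:
  fixes p :: "nat \<Rightarrow> nat"
  assumes "\<not> bdd_above (range p)" and "(\<lambda>n. ln (real (p n)) / real n) \<longlonglongrightarrow> 0"
  obtains nd where "strict_mono nd" and "\<And>d. 0 < nd d" and "\<And>d. Suc d \<le> p (nd d)"
    and "\<And>d. real (p (Suc (nd d))) \<le> (1 + 1 / real (Suc d)) * real (p (nd d))"
proof -
  define good where "good d n \<longleftrightarrow>
    0 < n \<and> Suc d \<le> p n \<and> real (p (Suc n)) \<le> (1 + 1 / real (Suc d)) * real (p n)" for d n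
  have step: "\<exists>n. good d n \<and> m < n" for d m
  proof -
    obtain n where "Suc m \<le> n" "Suc d \<le> p n" "real (p (Suc n)) \<le> (1 + 1 / real (Suc d)) * real (p n)"
      using exists_slow_growth_step[OF assms, of "1 / real (Suc d)" "Suc m" "Suc d"] by auto
    then show ?thesis unfolding good_def by (intro exI[of _ n]) auto
  qed
  have "\<exists>nd. \<forall>d. good d (nd d) \<and> nd d < nd (Suc d)"
    by (rule dependent_nat_choice) (use step in auto)
  then obtain nd where "\<And>d. good d (nd d)" "\<And>d. nd d < nd (Suc d)" by blast
  then show ?thesis
    using that[of nd] unfolding good_def strict_mono_Suc_iff by blast
qed

lemma fraction_tendsto_1_iff:
  assumes "\<And>n. finite (A n)" and "\<And>n. 0 < card (A n)"
  shows "(\<lambda>n. real (card {x \<in> A n. P n x}) / real (card (A n))) \<longlonglongrightarrow> 1 \<longleftrightarrow>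
    (\<lambda>n. real (card {x \<in> A n. \<not> P n x}) / real (card (A n))) \<longlonglongrightarrow> 0"
proof -
  have "real (card {x \<in> A n. \<not> P n x}) / real (card (A n))
      = 1 - real (card {x \<in> A n. P n x}) / real (card (A n))" for n
    using card_filter_add_card_filter_not[OF assms(1), of n "P n"] assms(2)[of n]
    by (simp add: field_simps flip: of_nat_add)
  then show ?thesis by (simp add: LIMSEQ_iff abs_minus_commute)
qed

lemma converges_to_Z_if_slow_growth:
  fixes L :: "'a::finite list set"
  assumes fac: "factorial_lang L" and ap: "almost_prolongable L" and mono: "strict_mono nd"
    and large: "\<And>d. Suc d \<le> complexity L (nd d)"
    and slow: "\<And>d. real (complexity L (Suc (nd d))) \<le> (1 + 1 / real (Suc d)) * real (complexity L (nd d))"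
  shows "converges_to_Z L nd"
  unfolding converges_to_Z_def
proof
  fix r
  define P where "P d = real (card (Ln L (nd d)))" for d
  define NL where "NL d = real (card {v \<in> Ln L (nd d). \<not> left_prolongable L v}) / P d" for d
  define NR where "NR d = real (card {v \<in> Ln L (nd d). \<not> right_prolongable L v}) / P d" for d
  define S where "S = real (\<Sum>m=1..2 * r + 2. card (UNIV :: 'a set) ^ m)"
  have S_nonneg: "0 \<le> S" unfolding S_def by (rule of_nat_0_le_iff)
  have card_pos: "0 < card (Ln L (nd d))" for d
    using large[of d] unfolding complexity_def by simp
  have P_ge: "real (Suc d) \<le> P d" for d
    using large[of d] unfolding P_def complexity_def by simp
  have "(\<lambda>d. real (card {v \<in> Ln L (nd d). left_prolongable L v}) / P d) \<longlonglongrightarrow> 1"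
    using LIMSEQ_subseq_LIMSEQ[OF conjunct1[OF ap[unfolded almost_prolongable_def]] mono]
    by (simp add: o_def P_def complexity_def)
  then have NL_lim: "NL \<longlonglongrightarrow> 0"
    unfolding NL_def P_def by (subst (asm) fraction_tendsto_1_iff) (simp_all add: finite_Ln card_pos)
  have "(\<lambda>d. real (card {v \<in> Ln L (nd d). right_prolongable L v}) / P d) \<longlonglongrightarrow> 1"
    using LIMSEQ_subseq_LIMSEQ[OF conjunct2[OF ap[unfolded almost_prolongable_def]] mono]
    by (simp add: o_def P_def complexity_def)
  then have NR_lim: "NR \<longlonglongrightarrow> 0"
    unfolding NR_def P_def by (subst (asm) fraction_tendsto_1_iff) (simp_all add: finite_Ln card_pos)
  define bound where "bound d = ((16 + 12 * real r) + S) / real (Suc d) + (18 + 12 * real r) * (NL d + NR d)" for d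
  have "bound \<longlonglongrightarrow> ((16 + 12 * real r) + S) * 0 + (18 + 12 * real r) * (0 + 0)"
    unfolding bound_def divide_inverse
    by (intro tendsto_intros NL_lim NR_lim LIMSEQ_inverse_real_of_nat)
  then have bound_lim: "bound \<longlonglongrightarrow> 0" by simp
  have lower: "eventually (\<lambda>d. 0 \<le> real (card {v \<in> Ln L (nd d). \<not> ball_is_line L (nd d) r v}) / P d) sequentially"
    by (simp add: P_def)
  have upper: "eventually (\<lambda>d. real (card {v \<in> Ln L (nd d). \<not> ball_is_line L (nd d) r v}) / P d \<le> bound d) sequentially"
    using eventually_ge_at_top[of "2 * r + 2"]
  proof eventually_elim
    case (elim d)
    let ?q = "real (card (Ln L (Suc (nd d))))"
    have "2 * r + 2 \<le> nd d" using elim seq_suble[OF mono, of d] by linarith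
    let ?NL = "card {v \<in> Ln L (nd d). \<not> left_prolongable L v}"
      and ?NR = "card {v \<in> Ln L (nd d). \<not> right_prolongable L v}"
    have "?q - real (card (Ln L (nd d))) \<le> P d / real (Suc d)"
      using slow[of d] unfolding P_def complexity_def by (simp add: field_simps)
    then have "(16 + 12 * real r) * (?q - real (card (Ln L (nd d))))
        \<le> (16 + 12 * real r) * (P d / real (Suc d))"
      by (rule mult_left_mono) simp
    moreover have "S \<le> S * P d / real (Suc d)"
    proof -
      have "S * 1 \<le> S * (P d / real (Suc d))"
        using P_ge[of d] S_nonneg by (intro mult_left_mono) simp_all
      then show ?thesis by simp
    qed
    moreover have "(18 + 12 * real r) * ((NL d + NR d) * P d) = (18 + 12 * real r) * real (?NL + ?NR)"
      using card_pos[of d] by (simp add: NL_def NR_def P_def field_simps)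
    ultimately have "real (card {v \<in> Ln L (nd d). \<not> ball_is_line L (nd d) r v})
        \<le> (16 + 12 * real r) * (P d / real (Suc d)) + (18 + 12 * real r) * ((NL d + NR d) * P d)
          + S * P d / real (Suc d)"
      using card_not_line_le[OF fac \<open>2 * r + 2 \<le> nd d\<close>] S_def by linarith
    also have "\<dots> = bound d * P d"
      by (simp add: bound_def ring_distribs add_divide_distrib)
    finally show ?case
      using card_pos[of d] by (simp add: P_def divide_le_eq)
  qed
  have "(\<lambda>d. real (card {v \<in> Ln L (nd d). \<not> ball_is_line L (nd d) r v}) / P d) \<longlonglongrightarrow> 0"
    by (rule tendsto_sandwich[OF lower upper tendsto_const bound_lim])
  then show "(\<lambda>d. real (card {v \<in> Ln L (nd d). ball_is_line L (nd d) r v}) / real (card (Ln L (nd d))))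
      \<longlonglongrightarrow> 1"
    unfolding P_def by (subst fraction_tendsto_1_iff) (simp_all add: finite_Ln card_pos)
qed

theorem lemma2p5:
  fixes L :: "('a::finite) list set"
  assumes "factorial_lang L"
    and "almost_prolongable L"
    and "\<not> bdd_above (range (complexity L))"
    and "subexponential (complexity L)"
  shows "\<exists>nd :: nat \<Rightarrow> nat. strict_mono nd \<and> (\<forall>d. nd d > 0) \<and> converges_to_Z L nd"
proof -
  obtain nd where "strict_mono nd" "\<And>d. 0 < nd d" "\<And>d. Suc d \<le> complexity L (nd d)"
    "\<And>d. real (complexity L (Suc (nd d))) \<le> (1 + 1 / real (Suc d)) * real (complexity L (nd d))"
    using exists_slowly_growing_subseq[OF assms(3) assms(4)[unfolded subexponential_def]] by blast
  then show ?thesis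
    using converges_to_Z_if_slow_growth[OF assms(1,2)] by blast
qed

end
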